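(* Let $a,n$ be positive integers and $Y=\mathrm{key}((a^n))$ (the rectangular tableau with $n$ rows whose $i$-th row consists of $a$ copies of $i$). Let $u$ and $v$ be words in the alphabet $[n]$ with contents $\alpha$ and $\beta$ respectively. The following are equivalent: (1) $vu\sim_K\mathrm{word}(Y)$; (2) $\alpha$ is a partition, $\alpha+\beta=(a^n)$, $u\sim_K\mathrm{word}(\mathrm{key}(\alpha))$ and $v\sim_K\mathrm{word}(\mathrm{key}(\beta))$.
   Context: $\sim_K$ is Knuth equivalence of words. Tableaux are in English notation; column-strict means rows weakly increase and columns strictly increase; $\mathrm{word}(T)=\dotsb u^2u^1$ where $u^i$ is the $i$-th row read left to right. The content of a word in $[n]$ is the vector $(c_1,\dots,c_n)$ with $c_i$ the number of letters $i$. For a composition $\gamma=(\gamma_1,\dots,\gamma_n)$ of nonnegative integers, let $\gamma^+$ be its decreasing rearrangement; the key tableau $\mathrm{key}(\gamma)$ is the unique column-strict tableau of shape $\gamma^+$ and content $\gamma$; explicitly its $j$-th column consists of the letters $i$ with $\gamma_i\ge j$. *)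

theory Defs
  imports Main
begin

text \<open>Words are lists of positive naturals. Elementary Knuth transformations
  (Fulton): y z x <-> y x z if x < y <= z; x z y <-> z x y if x <= y < z.\<close>

inductive knuth_step :: "nat list \<Rightarrow> nat list \<Rightarrow> bool" where
  K1: "x < y \<Longrightarrow> y \<le> z \<Longrightarrow> knuth_step (p @ [y, z, x] @ s) (p @ [y, x, z] @ s)"
| K2: "x \<le> y \<Longrightarrow> y < z \<Longrightarrow> knuth_step (p @ [x, z, y] @ s) (p @ [z, x, y] @ s)"

definition knuth_equiv :: "nat list \<Rightarrow> nat list \<Rightarrow> bool" where
  "knuth_equiv = equivclp knuth_step"

definition content :: "nat \<Rightarrow> nat list \<Rightarrow> nat list" where
  "content n w = map (\<lambda>i. count_list w i) [1..<n+1]"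

text \<open>A tableau is the list of its rows (top row first, English notation).
  word(T) = ... u^2 u^1.\<close>
definition tab_word :: "nat list list \<Rightarrow> nat list" where
  "tab_word T = concat (rev T)"

text \<open>Composition gamma = (gamma_1,...,gamma_n) as a list; gamma_i = gamma ! (i-1).
  The j-th column of key(gamma) consists of the letters i with gamma_i >= j.\<close>
definition key_col :: "nat list \<Rightarrow> nat \<Rightarrow> nat list" where
  "key_col \<gamma> j = filter (\<lambda>i. j \<le> \<gamma> ! (i - 1)) [1..<length \<gamma> + 1]"

definition key :: "nat list \<Rightarrow> nat list list" where
  "key \<gamma> = map (\<lambda>r. map (\<lambda>j. key_col \<gamma> j ! r)
                    (filter (\<lambda>j. r < length (key_col \<gamma> j)) [1..<Max (insert 0 (set \<gamma>)) + 1]))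
               [0..<length (key_col \<gamma> 1)]"

end

theory Submission
  imports Defs "HOL-Library.Sublist"
begin

text \<open>A word in \<open>{1..n}\<close> is Knuth equivalent to the row word of \<open>key \<alpha>\<close>, for a partition
  \<open>\<alpha>\<close>, iff it is a Yamanouchi word (every suffix contains at least as many letters \<open>i\<close> as
  \<open>i + 1\<close>) of content \<open>\<alpha>\<close>. Indeed, Knuth moves preserve the content and the Yamanouchi
  property, and a Yamanouchi word can be moved, inserting its letters from right to left, onto the
  superstandard word whose block of letters \<open>i\<close> has length \<open>\<alpha>\<^sub>i\<close>; this is the row word of
  \<open>key \<alpha>\<close>.
  Reversing a word and complementing its letters (\<open>i \<mapsto> n + 1 - i\<close>) also preserves Knuth
  equivalence, and it turns the row word of \<open>key \<beta>\<close>, for weakly increasing \<open>\<beta>\<close>, into a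
  Yamanouchi word. Hence \<open>v\<close> is equivalent to that row word iff \<open>v\<close> has content \<open>\<beta>\<close> and
  every prefix of \<open>v\<close> contains at most as many letters \<open>i\<close> as \<open>i + 1\<close>.
  Since \<open>word Y\<close> is Yamanouchi of content \<open>(a\<^sup>n)\<close>, the theorem reduces to counting: when
  \<open>v u\<close> has rectangular content and \<open>v = q s\<close>, the suffix \<open>s u\<close> satisfies the Yamanouchi
  condition iff the prefix \<open>q\<close> satisfies the reversed one.\<close>

lemma knuth_equiv_refl [simp]: "knuth_equiv w w"
  by (simp add: knuth_equiv_def)

lemma knuth_equiv_sym: "knuth_equiv a b \<Longrightarrow> knuth_equiv b a"
  unfolding knuth_equiv_def by (rule equivclp_sym)

lemma knuth_equiv_trans [trans]: "knuth_equiv a b \<Longrightarrow> knuth_equiv b c \<Longrightarrow> knuth_equiv a c"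
  unfolding knuth_equiv_def by (rule equivclp_trans)

lemma knuth_step_imp_knuth_equiv: "knuth_step a b \<Longrightarrow> knuth_equiv a b"
  unfolding knuth_equiv_def by blast

lemma knuth_equiv_invariant:
  assumes "knuth_equiv a b"
    and "\<And>x y. knuth_equiv a x \<Longrightarrow> knuth_step x y \<Longrightarrow> P x = P y"
  shows "P a = P b"
  using assms(1) unfolding knuth_equiv_def
proof (induction rule: equivclp_induct)
  case (step y z)
  have "equivclp knuth_step a z" using step(1,2) by (rule equivclp_into_equivclp)
  then show ?case using step assms(2)[of y z] assms(2)[of z y] by (auto simp: knuth_equiv_def)
qed simp

lemma knuth_step_count_list: "knuth_step a b \<Longrightarrow> count_list a = count_list b"
  by (induction rule: knuth_step.induct) (auto simp: fun_eq_iff)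

lemma knuth_equiv_count_list: "knuth_equiv a b \<Longrightarrow> count_list a = count_list b"
  by (erule knuth_equiv_invariant) (erule knuth_step_count_list)

lemma knuth_equiv_set: "knuth_equiv a b \<Longrightarrow> set a = set b"
  by (drule knuth_equiv_count_list) (metis count_list_0_iff set_eq_iff)

lemma knuth_equiv_map:
  assumes "knuth_equiv a b"
    and "\<And>x y. knuth_equiv a x \<Longrightarrow> knuth_step x y \<Longrightarrow> knuth_equiv (f x) (f y)"
  shows "knuth_equiv (f a) (f b)"
proof -
  have "knuth_equiv (f a) (f a) = knuth_equiv (f a) (f b)"
    using assms(1)
    by (rule knuth_equiv_invariant) (use assms(2) in \<open>blast intro: knuth_equiv_trans knuth_equiv_sym\<close>)
  then show ?thesis by simp
qed

lemma knuth_step_append_cong: "knuth_step a b \<Longrightarrow> knuth_step (p @ a @ s) (p @ b @ s)"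
proof (induction rule: knuth_step.induct)
  case (K1 x y z p' s')
  show ?case using knuth_step.K1[OF K1, of "p @ p'" "s' @ s"] by simp
next
  case (K2 x y z p' s')
  show ?case using knuth_step.K2[OF K2, of "p @ p'" "s' @ s"] by simp
qed

lemma knuth_equiv_append_cong: "knuth_equiv a b \<Longrightarrow> knuth_equiv (p @ a @ s) (p @ b @ s)"
  by (rule knuth_equiv_map) (auto intro: knuth_step_imp_knuth_equiv knuth_step_append_cong)

lemma knuth_equiv_Cons: "knuth_equiv a b \<Longrightarrow> knuth_equiv (x # a) (x # b)"
  using knuth_equiv_append_cong[of a b "[x]" "[]"] by simp

lemma knuth_equiv_append_left: "knuth_equiv a b \<Longrightarrow> knuth_equiv (p @ a) (p @ b)"
  using knuth_equiv_append_cong[of a b p "[]"] by simp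

section \<open>Yamanouchi words\<close>

definition decreasing_content :: "nat list \<Rightarrow> bool" where
  "decreasing_content w \<longleftrightarrow> (\<forall>i>0. count_list w (Suc i) \<le> count_list w i)"

definition increasing_content :: "nat \<Rightarrow> nat list \<Rightarrow> bool" where
  "increasing_content n w \<longleftrightarrow> (\<forall>i. 0 < i \<longrightarrow> i < n \<longrightarrow> count_list w i \<le> count_list w (Suc i))"

definition yamanouchi :: "nat list \<Rightarrow> bool" where
  "yamanouchi w \<longleftrightarrow> (\<forall>s. suffix s w \<longrightarrow> decreasing_content s)"

lemma decreasing_content_cong:
  "count_list a = count_list b \<Longrightarrow> decreasing_content a = decreasing_content b"
  by (simp add: decreasing_content_def)

lemma yamanouchi_Nil [simp]: "yamanouchi []"
  by (simp add: yamanouchi_def decreasing_content_def)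

lemma yamanouchi_Cons: "yamanouchi (x # w) \<longleftrightarrow> decreasing_content (x # w) \<and> yamanouchi w"
  by (auto simp: yamanouchi_def suffix_Cons)

lemma yamanouchi_imp_decreasing_content: "yamanouchi w \<Longrightarrow> decreasing_content w"
  by (simp add: yamanouchi_def)

lemma yamanouchi_appendD: "yamanouchi (v @ u) \<Longrightarrow> yamanouchi u"
  by (auto simp: yamanouchi_def intro: suffix_appendI)

lemma yamanouchi_append_cong:
  "yamanouchi a = yamanouchi b \<Longrightarrow> count_list a = count_list b \<Longrightarrow>
   yamanouchi (p @ a) = yamanouchi (p @ b)"
proof (induction p)
  case (Cons x p)
  have "decreasing_content (x # p @ a) = decreasing_content (x # p @ b)"
    by (rule decreasing_content_cong) (simp add: fun_eq_iff Cons.prems(2))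
  then show ?case using Cons by (simp add: yamanouchi_Cons)
qed simp

text \<open>A Knuth move changes the content of exactly one suffix of the word. The following two
  lemmas show that, on either side of the move, the condition on that suffix is implied by the
  conditions on the other suffixes.\<close>

lemma decreasing_content_K1:
  assumes "decreasing_content s" "decreasing_content (x # z # s)"
    and "decreasing_content (y # x # z # s)"
    and "x < y" "y \<le> z"
  shows "decreasing_content (x # s) \<and> decreasing_content (z # s)"
  unfolding decreasing_content_def
proof (intro conjI allI impI)
  fix i :: nat assume "0 < i"
  then have "count_list s (Suc i) \<le> count_list s i"
    and "count_list (x # z # s) (Suc i) \<le> count_list (x # z # s) i"
    and "count_list (y # x # z # s) (Suc i) \<le> count_list (y # x # z # s) i"
    using assms(1-3) unfolding decreasing_content_def by blast+
  then show "count_list (x # s) (Suc i) \<le> count_list (x # s) i"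
    and "count_list (z # s) (Suc i) \<le> count_list (z # s) i"
    using assms(4,5) by (auto split: if_splits)
qed

lemma decreasing_content_K2:
  assumes "decreasing_content s" "decreasing_content (y # s)" "decreasing_content (x # z # y # s)"
    and "x \<le> y" "y < z"
  shows "decreasing_content (z # y # s) \<and> decreasing_content (x # y # s)"
  unfolding decreasing_content_def
proof (intro conjI allI impI)
  fix i :: nat assume "0 < i"
  then have "count_list s (Suc i) \<le> count_list s i"
    and "count_list (y # s) (Suc i) \<le> count_list (y # s) i"
    and "count_list (x # z # y # s) (Suc i) \<le> count_list (x # z # y # s) i"
    using assms(1-3) unfolding decreasing_content_def by blast+
  then show "count_list (z # y # s) (Suc i) \<le> count_list (z # y # s) i"
    and "count_list (x # y # s) (Suc i) \<le> count_list (x # y # s) i"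
    using assms(4,5) by (auto split: if_splits)
qed

lemma knuth_step_yamanouchi: "knuth_step a b \<Longrightarrow> yamanouchi a = yamanouchi b"
proof (induction rule: knuth_step.induct)
  case (K1 x y z p s)
  have "decreasing_content (z # x # s) = decreasing_content (x # z # s)"
    and "decreasing_content (y # z # x # s) = decreasing_content (y # x # z # s)"
    by (rule decreasing_content_cong; simp add: fun_eq_iff)+
  then have "yamanouchi ([y, z, x] @ s) = yamanouchi ([y, x, z] @ s)"
    using decreasing_content_K1[of s x z y] K1 yamanouchi_imp_decreasing_content[of s]
    by (auto simp: yamanouchi_Cons)
  then show ?case by (rule yamanouchi_append_cong) (auto simp: fun_eq_iff)
next
  case (K2 x y z p s)
  have "decreasing_content (x # z # y # s) = decreasing_content (z # x # y # s)"
    by (rule decreasing_content_cong; simp add: fun_eq_iff)+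
  then have "yamanouchi ([x, z, y] @ s) = yamanouchi ([z, x, y] @ s)"
    using decreasing_content_K2[of s y x z] K2 yamanouchi_imp_decreasing_content[of s]
    by (auto simp: yamanouchi_Cons)
  then show ?case by (rule yamanouchi_append_cong) (auto simp: fun_eq_iff)
qed

lemma knuth_equiv_yamanouchi: "knuth_equiv a b \<Longrightarrow> yamanouchi a = yamanouchi b"
  by (erule knuth_equiv_invariant) (erule knuth_step_yamanouchi)

section \<open>Reversing and complementing words\<close>

definition rev_compl :: "nat \<Rightarrow> nat list \<Rightarrow> nat list" where
  "rev_compl n w = rev (map (\<lambda>i. Suc n - i) w)"

lemma rev_compl_append: "rev_compl n (a @ b) = rev_compl n b @ rev_compl n a"
  by (simp add: rev_compl_def)

lemma rev_compl_rev_compl: "set w \<subseteq> {1..n} \<Longrightarrow> rev_compl n (rev_compl n w) = w"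
  by (induction w) (auto simp: rev_compl_def)

lemma set_rev_compl: "set w \<subseteq> {1..n} \<Longrightarrow> set (rev_compl n w) \<subseteq> {1..n}"
  by (auto simp: rev_compl_def subset_iff)

lemma count_list_rev_compl:
  "set w \<subseteq> {1..n} \<Longrightarrow> 0 < i \<Longrightarrow> count_list (rev_compl n w) i = count_list w (Suc n - i)"
  by (induction w) (auto simp: rev_compl_def)

lemma count_list_rev_compl_cong:
  assumes "set a \<subseteq> {1..n}" "set b \<subseteq> {1..n}" "count_list a = count_list b"
  shows "count_list (rev_compl n a) = count_list (rev_compl n b)"
proof
  fix i
  show "count_list (rev_compl n a) i = count_list (rev_compl n b) i"
  proof (cases "i = 0")
    case True
    then have "i \<notin> set (rev_compl n a)" "i \<notin> set (rev_compl n b)"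
      using set_rev_compl[OF assms(1)] set_rev_compl[OF assms(2)] by auto
    then show ?thesis by simp
  next
    case False
    then show ?thesis using assms by (simp add: count_list_rev_compl)
  qed
qed

lemma knuth_step_rev_compl:
  "knuth_step a b \<Longrightarrow> set a \<subseteq> {1..n} \<Longrightarrow> knuth_step (rev_compl n b) (rev_compl n a)"
proof (induction rule: knuth_step.induct)
  case (K1 x y z p s)
  have "knuth_step (rev_compl n s @ [Suc n - z, Suc n - x, Suc n - y] @ rev_compl n p)
                   (rev_compl n s @ [Suc n - x, Suc n - z, Suc n - y] @ rev_compl n p)"
    by (rule knuth_step.K2) (use K1 in auto)
  then show ?case by (simp add: rev_compl_def)
next
  case (K2 x y z p s)
  have "knuth_step (rev_compl n s @ [Suc n - y, Suc n - x, Suc n - z] @ rev_compl n p)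
                   (rev_compl n s @ [Suc n - y, Suc n - z, Suc n - x] @ rev_compl n p)"
    by (rule knuth_step.K1) (use K2 in auto)
  then show ?case by (simp add: rev_compl_def)
qed

lemma knuth_equiv_rev_compl:
  assumes "knuth_equiv a b" "set a \<subseteq> {1..n}"
  shows "knuth_equiv (rev_compl n a) (rev_compl n b)"
  using assms(1)
proof (rule knuth_equiv_map)
  fix x y assume "knuth_equiv a x" "knuth_step x y"
  then have "knuth_step (rev_compl n y) (rev_compl n x)"
    using assms(2) knuth_equiv_set by (metis knuth_step_rev_compl)
  then show "knuth_equiv (rev_compl n x) (rev_compl n y)"
    by (blast intro: knuth_equiv_sym knuth_step_imp_knuth_equiv)
qed

lemma decreasing_content_rev_compl:
  assumes "set w \<subseteq> {1..n}"
  shows "decreasing_content (rev_compl n w) \<longleftrightarrow> increasing_content n w"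
proof
  assume dec: "decreasing_content (rev_compl n w)"
  show "increasing_content n w"
    unfolding increasing_content_def
  proof (intro allI impI)
    fix i assume "0 < i" "i < n"
    then show "count_list w i \<le> count_list w (Suc i)"
      using dec[unfolded decreasing_content_def, rule_format, of "n - i"]
      by (simp add: count_list_rev_compl[OF assms] Suc_diff_le)
  qed
next
  assume inc: "increasing_content n w"
  show "decreasing_content (rev_compl n w)"
    unfolding decreasing_content_def
  proof (intro allI impI)
    fix i :: nat assume "0 < i"
    show "count_list (rev_compl n w) (Suc i) \<le> count_list (rev_compl n w) i"
    proof (cases "i < n")
      case True
      then show ?thesis
        using inc[unfolded increasing_content_def, rule_format, of "n - i"] \<open>0 < i\<close>
        by (simp add: count_list_rev_compl[OF assms] Suc_diff_le)
    next
      case False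
      then have "Suc n - Suc i = 0" and "0 \<notin> set w" using assms by auto
      then show ?thesis by (simp add: count_list_rev_compl[OF assms])
    qed
  qed
qed

lemma yamanouchi_rev_compl_iff:
  assumes "set w \<subseteq> {1..n}"
  shows "yamanouchi (rev_compl n w) \<longleftrightarrow> (\<forall>q. prefix q w \<longrightarrow> increasing_content n q)"
proof
  assume yam: "yamanouchi (rev_compl n w)"
  show "\<forall>q. prefix q w \<longrightarrow> increasing_content n q"
  proof (intro allI impI)
    fix q assume "prefix q w"
    then obtain r where w: "w = q @ r" by (auto simp: prefix_def)
    then have "suffix (rev_compl n q) (rev_compl n w)" by (simp add: rev_compl_append suffix_def)
    then have "decreasing_content (rev_compl n q)" using yam by (simp add: yamanouchi_def)
    then show "increasing_content n q" using assms w by (simp add: decreasing_content_rev_compl)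
  qed
next
  assume inc: "\<forall>q. prefix q w \<longrightarrow> increasing_content n q"
  show "yamanouchi (rev_compl n w)"
    unfolding yamanouchi_def
  proof (intro allI impI)
    fix s assume "suffix s (rev_compl n w)"
    then obtain z where z: "rev_compl n w = z @ s" by (auto simp: suffix_def)
    have s: "set s \<subseteq> {1..n}" using set_rev_compl[OF assms] z by auto
    have "w = rev_compl n s @ rev_compl n z"
      using z rev_compl_rev_compl[OF assms] by (metis rev_compl_append)
    then have "increasing_content n (rev_compl n s)" using inc by (simp add: prefix_def)
    then show "decreasing_content s"
      using decreasing_content_rev_compl[OF set_rev_compl[OF s]] rev_compl_rev_compl[OF s] by simp
  qed
qed

section \<open>The Knuth class of a Yamanouchi word\<close>

fun superstandard_word :: "(nat \<Rightarrow> nat) \<Rightarrow> nat \<Rightarrow> nat list" where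
  "superstandard_word f 0 = []"
| "superstandard_word f (Suc k) = replicate (f (Suc k)) (Suc k) @ superstandard_word f k"

lemma superstandard_word_cong:
  "(\<And>i. 1 \<le> i \<Longrightarrow> i \<le> k \<Longrightarrow> f i = g i) \<Longrightarrow> superstandard_word f k = superstandard_word g k"
  by (induction k) auto

lemma count_list_superstandard_word:
  "count_list (superstandard_word f k) i = (if 1 \<le> i \<and> i \<le> k then f i else 0)"
  by (induction k) (auto simp: count_list_eq_length_filter le_Suc_eq)

lemma knuth_equiv_replicate_snoc:
  "y < z \<Longrightarrow> knuth_equiv (replicate (Suc k) z @ [y]) (z # y # replicate k z)"
proof (induction k)
  case (Suc k)
  have "replicate (Suc (Suc k)) z @ [y] = z # (replicate (Suc k) z @ [y])" by simp
  also have "knuth_equiv \<dots> (z # z # y # replicate k z)"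
    using knuth_equiv_Cons[OF Suc.IH[OF Suc.prems]] by simp
  also have "knuth_equiv \<dots> (z # y # replicate (Suc k) z)"
    using knuth_step_imp_knuth_equiv[OF knuth_step.K1[of y z z "[]" "replicate k z"]] Suc.prems
    by simp
  finally show ?case .
qed simp

text \<open>The letter \<open>x\<close> travels to the right through the block \<open>z\<^sup>k\<close>, using one \<open>y\<close>
  of the following block for each \<open>z\<close> it passes.\<close>
lemma knuth_equiv_Cons_replicate:
  "x \<le> y \<Longrightarrow> y < z \<Longrightarrow> k \<le> k' \<Longrightarrow>
   knuth_equiv (x # replicate k z @ replicate k' y @ s) (replicate k z @ x # replicate k' y @ s)"
proof (induction k arbitrary: x k')
  case (Suc k)
  then obtain k'' where k': "k' = Suc k''" "k \<le> k''" by (cases k') auto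
  have "x # replicate (Suc k) z @ replicate k' y @ s
        = x # (replicate (Suc k) z @ [y]) @ replicate k'' y @ s"
    using k' by simp
  also have "knuth_equiv \<dots> (x # (z # y # replicate k z) @ replicate k'' y @ s)"
    using knuth_equiv_append_cong[OF knuth_equiv_replicate_snoc[OF Suc.prems(2), of k],
        of "[x]" "replicate k'' y @ s"] by simp
  also have "knuth_equiv \<dots> (z # x # y # replicate k z @ replicate k'' y @ s)"
    using knuth_step_imp_knuth_equiv[OF
        knuth_step.K2[of x y z "[]" "replicate k z @ replicate k'' y @ s"]]
      Suc.prems by simp
  also have "knuth_equiv \<dots> (z # x # replicate k z @ y # replicate k'' y @ s)"
    using knuth_equiv_append_cong[OF Suc.IH[of y k'', OF _ Suc.prems(2) k'(2)], of "[z, x]" "[]"]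
    by simp
  also have "\<dots> = z # x # replicate k z @ replicate k' y @ s"
    using k' by simp
  also have "knuth_equiv \<dots> (z # replicate k z @ x # replicate k' y @ s)"
    using knuth_equiv_Cons[OF Suc.IH[of x k', OF Suc.prems(1,2)]] k' by simp
  finally show ?case by simp
qed simp

lemma knuth_equiv_Cons_superstandard_word:
  "1 \<le> x \<Longrightarrow> x \<le> k \<Longrightarrow> (\<And>i. x \<le> i \<Longrightarrow> i < k \<Longrightarrow> f (Suc i) \<le> f i) \<Longrightarrow>
   knuth_equiv (x # superstandard_word f k) (superstandard_word (f(x := Suc (f x))) k)"
proof (induction k)
  case (Suc k)
  show ?case
  proof (cases "x = Suc k")
    case True
    have "superstandard_word (f(x := Suc (f x))) k = superstandard_word f k"
      by (rule superstandard_word_cong) (use True in auto)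
    then have "superstandard_word (f(x := Suc (f x))) (Suc k) = x # superstandard_word f (Suc k)"
      using True by (simp only: superstandard_word.simps fun_upd_same replicate_Suc append_Cons)
    then show ?thesis by (simp only: knuth_equiv_refl)
  next
    case False
    then have xk: "x \<le> k" using Suc.prems by simp
    then obtain k0 where k0: "k = Suc k0" using Suc.prems(1) by (cases k) auto
    have le: "f (Suc k) \<le> f k" using Suc.prems(3)[of k] xk by simp
    have "x # superstandard_word f (Suc k)
          = x # replicate (f (Suc k)) (Suc k) @ replicate (f k) k @ superstandard_word f k0"
      using k0 by simp
    also have "knuth_equiv \<dots>
        (replicate (f (Suc k)) (Suc k) @ x # replicate (f k) k @ superstandard_word f k0)"
      by (rule knuth_equiv_Cons_replicate) (use xk le in auto)
    also have "\<dots> = replicate (f (Suc k)) (Suc k) @ x # superstandard_word f k"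
      using k0 by simp
    also have "knuth_equiv \<dots>
        (replicate (f (Suc k)) (Suc k) @ superstandard_word (f(x := Suc (f x))) k)"
      by (rule knuth_equiv_append_left, rule Suc.IH) (use Suc.prems xk in auto)
    also have "\<dots> = superstandard_word (f(x := Suc (f x))) (Suc k)"
      using False by simp
    finally show ?thesis .
  qed
qed simp

lemma yamanouchi_knuth_equiv_superstandard_word:
  "yamanouchi w \<Longrightarrow> set w \<subseteq> {1..n} \<Longrightarrow> knuth_equiv w (superstandard_word (count_list w) n)"
proof (induction w)
  case Nil
  have "superstandard_word (\<lambda>_. 0) n = []" by (induction n) auto
  then show ?case by simp
next
  case (Cons x w)
  have yam: "yamanouchi w" and dec: "decreasing_content w"
    using Cons.prems(1) by (simp_all add: yamanouchi_Cons yamanouchi_imp_decreasing_content)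
  have "knuth_equiv (x # w) (x # superstandard_word (count_list w) n)"
    using Cons yam by (simp add: knuth_equiv_Cons)
  also have "knuth_equiv \<dots> (superstandard_word ((count_list w)(x := Suc (count_list w x))) n)"
    by (rule knuth_equiv_Cons_superstandard_word)
      (use Cons.prems dec in \<open>auto simp: decreasing_content_def\<close>)
  also have "(count_list w)(x := Suc (count_list w x)) = count_list (x # w)"
    by (auto simp: fun_eq_iff)
  finally show ?case .
qed

lemma yamanouchi_replicate_append:
  "yamanouchi w \<Longrightarrow> count_list w c = 0 \<Longrightarrow> count_list w (Suc c) = 0 \<Longrightarrow>
   (c = 1 \<or> j \<le> count_list w (c - 1)) \<Longrightarrow>
   yamanouchi (replicate j c @ w)"
proof (induction j)
  case (Suc j)
  have "decreasing_content (c # replicate j c @ w)"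
    unfolding decreasing_content_def
  proof (intro allI impI)
    fix i :: nat assume "0 < i"
    then have "count_list w (Suc i) \<le> count_list w i"
      using yamanouchi_imp_decreasing_content[OF Suc.prems(1)] by (simp add: decreasing_content_def)
    then show "count_list (c # replicate j c @ w) (Suc i) \<le> count_list (c # replicate j c @ w) i"
      using Suc.prems(2-4) \<open>0 < i\<close>
      by (cases "c = Suc i"; cases "c = i") (auto simp: count_list_eq_length_filter)
  qed
  then show ?case using Suc.IH Suc.prems by (auto simp: yamanouchi_Cons)
qed simp

lemma yamanouchi_superstandard_word:
  "(\<And>i. 0 < i \<Longrightarrow> i < k \<Longrightarrow> f (Suc i) \<le> f i) \<Longrightarrow> yamanouchi (superstandard_word f k)"
proof (induction k)
  case (Suc k)
  then show ?case
    by (simp, intro yamanouchi_replicate_append) (auto simp: count_list_superstandard_word)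
qed simp

lemma yamanouchi_knuth_equiv:
  assumes "yamanouchi a" "yamanouchi b" "set a \<subseteq> {1..n}" "set b \<subseteq> {1..n}"
    and "count_list a = count_list b"
  shows "knuth_equiv a b"
  using yamanouchi_knuth_equiv_superstandard_word[OF assms(1,3)]
    yamanouchi_knuth_equiv_superstandard_word[OF assms(2,4)] assms(5)
  by (metis knuth_equiv_sym knuth_equiv_trans)

lemma length_content [simp]: "length (content n w) = n"
  by (simp add: content_def)

lemma nth_content: "i < n \<Longrightarrow> content n w ! i = count_list w (Suc i)"
  by (simp add: content_def del: upt_Suc)

lemma content_eq_iff_count_list_eq:
  assumes "set a \<subseteq> {1..n}" "set b \<subseteq> {1..n}"
  shows "content n a = content n b \<longleftrightarrow> count_list a = count_list b"
proof
  assume eq: "content n a = content n b"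
  show "count_list a = count_list b"
  proof
    fix i
    show "count_list a i = count_list b i"
    proof (cases "1 \<le> i \<and> i \<le> n")
      case True
      then have "i - 1 < n" "Suc (i - 1) = i" by auto
      then show ?thesis using arg_cong[OF eq, of "\<lambda>c. c ! (i - 1)"] by (simp only: nth_content)
    next
      case False
      then have "i \<notin> set a" "i \<notin> set b" using assms by auto
      then show ?thesis by simp
    qed
  qed
qed (simp add: content_def)

lemma content_append_commute: "content n (v @ u) = map2 (+) (content n u) (content n v)"
  by (simp add: content_def map2_map_map add.commute)

lemma count_list_if_content_eq_replicate:
  assumes "content n w = replicate n a" "0 < i" "i \<le> n"
  shows "count_list w i = a"
proof -
  have "i - 1 < n" "Suc (i - 1) = i" using assms(2,3) by auto
  then show ?thesis
    using arg_cong[OF assms(1), of "\<lambda>c. c ! (i - 1)"] by (simp only: nth_content) simp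
qed

lemma decreasing_content_imp_sorted: "decreasing_content w \<Longrightarrow> sorted_wrt (\<ge>) (content n w)"
  by (simp add: sorted_wrt_iff_nth_Suc_transp nth_content decreasing_content_def)

lemma sorted_of_map2_add_eq_replicate:
  fixes \<alpha> \<beta> :: "nat list"
  assumes "length \<beta> = length \<alpha>" "sorted_wrt (\<ge>) \<alpha>" "map2 (+) \<alpha> \<beta> = replicate (length \<alpha>) a"
  shows "sorted_wrt (\<le>) \<beta>"
  unfolding sorted_wrt_iff_nth_less
proof (intro allI impI)
  fix i j assume ij: "i < j" "j < length \<beta>"
  then have "\<alpha> ! i + \<beta> ! i = a" "\<alpha> ! j + \<beta> ! j = a"
    using assms(1) arg_cong[OF assms(3), of "\<lambda>c. c ! i"] arg_cong[OF assms(3), of "\<lambda>c. c ! j"]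
    by simp_all
  moreover have "\<alpha> ! j \<le> \<alpha> ! i" using ij assms(1,2) by (simp add: sorted_wrt_iff_nth_less)
  ultimately show "\<beta> ! i \<le> \<beta> ! j" by linarith
qed

section \<open>Key tableaux\<close>

lemma filter_upt_upward_closed:
  "(\<And>i j. lo \<le> i \<Longrightarrow> i \<le> j \<Longrightarrow> j < hi \<Longrightarrow> P i \<Longrightarrow> P j) \<Longrightarrow>
   filter P [lo..<hi] = [hi - length (filter P [lo..<hi])..<hi]"
proof (induction hi)
  case (Suc hi)
  show ?case
  proof (cases "lo \<le> hi")
    case True
    have IH: "filter P [lo..<hi] = [hi - length (filter P [lo..<hi])..<hi]"
      by (rule Suc.IH) (use Suc.prems in auto)
    show ?thesis
    proof (cases "P hi")
      case True
      have "length (filter P [lo..<hi]) \<le> hi"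
        using length_filter_le[of P "[lo..<hi]"] by simp
      then show ?thesis using True \<open>lo \<le> hi\<close> IH by (simp add: upt_Suc_append)
    next
      case False
      have "filter P [lo..<hi] = []"
        using Suc.prems[of _ hi] False by (force simp: filter_empty_conv)
      then show ?thesis using False \<open>lo \<le> hi\<close> by simp
    qed
  qed simp
qed simp

lemma filter_upt_downward_closed:
  "(\<And>i j. lo \<le> i \<Longrightarrow> i \<le> j \<Longrightarrow> j < hi \<Longrightarrow> P j \<Longrightarrow> P i) \<Longrightarrow>
   filter P [lo..<hi] = [lo..<lo + length (filter P [lo..<hi])]"
proof (induction hi)
  case (Suc hi)
  show ?case
  proof (cases "lo \<le> hi")
    case True
    have IH: "filter P [lo..<hi] = [lo..<lo + length (filter P [lo..<hi])]"
      by (rule Suc.IH) (use Suc.prems in auto)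
    show ?thesis
    proof (cases "P hi")
      case True
      have "filter P [lo..<hi] = [lo..<hi]"
        using Suc.prems[of _ hi] True by (auto simp: filter_id_conv)
      then show ?thesis using True \<open>lo \<le> hi\<close> by simp
    next
      case False
      then show ?thesis using \<open>lo \<le> hi\<close> IH by simp
    qed
  qed simp
qed simp

lemma filter_le_upt: "b \<le> m \<Longrightarrow> filter (\<lambda>j. j \<le> b) [Suc 0..<Suc m] = [Suc 0..<Suc b]"
proof (induction m)
  case (Suc m)
  show ?case
  proof (cases "b \<le> m")
    case False
    then have "b = Suc m" using Suc.prems by simp
    then show ?thesis by (auto simp: filter_id_conv)
  qed (use Suc in simp)
qed simp

lemma length_filter_disj:
  "(\<And>x. x \<in> set xs \<Longrightarrow> \<not> (P x \<and> Q x)) \<Longrightarrow>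
   length (filter (\<lambda>x. P x \<or> Q x) xs) = length (filter P xs) + length (filter Q xs)"
  by (induction xs) auto

lemma count_list_map_filter:
  "count_list (map h (filter P xs)) y = length (filter (\<lambda>x. P x \<and> h x = y) xs)"
  by (induction xs) auto

lemma tab_word_Nil [simp]: "tab_word [] = []"
  by (simp add: tab_word_def)

lemma tab_word_Cons [simp]: "tab_word (t # T) = tab_word T @ t"
  by (simp add: tab_word_def)

lemma set_key_col: "set (key_col \<gamma> j) = {i. 1 \<le> i \<and> i \<le> length \<gamma> \<and> j \<le> \<gamma> ! (i - 1)}"
  by (auto simp: key_col_def)

lemma distinct_key_col: "distinct (key_col \<gamma> j)"
  by (simp add: key_col_def)

lemma length_key_col_antimono: "j \<le> j' \<Longrightarrow> length (key_col \<gamma> j') \<le> length (key_col \<gamma> j)"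
proof -
  assume "j \<le> j'"
  then have "key_col \<gamma> j' = filter (\<lambda>i. j' \<le> \<gamma> ! (i - 1)) (key_col \<gamma> j)"
    by (auto simp: key_col_def filter_filter intro: filter_cong)
  then show ?thesis by (metis length_filter_le)
qed

lemma length_key_col_le: "length (key_col \<gamma> j) \<le> length \<gamma>"
  unfolding key_col_def by (rule order_trans[OF length_filter_le]) (simp del: upt_Suc)

lemma length_key: "length (key \<gamma>) = length (key_col \<gamma> 1)"
  by (simp add: key_def)

lemma nth_key:
  "r < length (key \<gamma>) \<Longrightarrow> key \<gamma> ! r =
     map (\<lambda>j. key_col \<gamma> j ! r)
       (filter (\<lambda>j. r < length (key_col \<gamma> j)) [1..<Max (insert 0 (set \<gamma>)) + 1])"
  by (simp add: key_def del: upt_Suc)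

lemma count_list_tab_word_drop_key:
  "count_list (tab_word (drop r (key \<gamma>))) i =
   length (filter (\<lambda>j. i \<in> set (drop r (key_col \<gamma> j))) [1..<Max (insert 0 (set \<gamma>)) + 1])"
proof (induction "length (key \<gamma>) - r" arbitrary: r)
  case 0
  have "length (key_col \<gamma> j) \<le> r" if "1 \<le> j" for j
    using 0 length_key_col_antimono[OF that, of \<gamma>] by (simp add: length_key)
  then show ?case using 0 by (auto simp: filter_empty_conv)
next
  case (Suc m)
  let ?cols = "[1..<Max (insert 0 (set \<gamma>)) + 1]"
  have r: "r < length (key \<gamma>)" using Suc.hyps(2) by simp
  have mem: "i \<in> set (drop r (key_col \<gamma> j)) \<longleftrightarrow>
      i \<in> set (drop (Suc r) (key_col \<gamma> j)) \<or> (r < length (key_col \<gamma> j) \<and> key_col \<gamma> j ! r = i)"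
    for j
  proof (cases "r < length (key_col \<gamma> j)")
    case True
    then show ?thesis by (simp flip: Cons_nth_drop_Suc[OF True]) blast
  qed simp
  have disj: "\<not> (i \<in> set (drop (Suc r) (key_col \<gamma> j)) \<and>
      r < length (key_col \<gamma> j) \<and> key_col \<gamma> j ! r = i)"
    for j
  proof (cases "r < length (key_col \<gamma> j)")
    case True
    have "distinct (drop r (key_col \<gamma> j))" by (simp add: distinct_key_col distinct_drop)
    then show ?thesis using Cons_nth_drop_Suc[OF True, symmetric] by auto
  qed simp
  have "count_list (tab_word (drop r (key \<gamma>))) i
        = count_list (tab_word (drop (Suc r) (key \<gamma>))) i + count_list (key \<gamma> ! r) i"
    using Cons_nth_drop_Suc[OF r] by (metis count_list_append tab_word_Cons)
  also have "\<dots> = length (filter (\<lambda>j. i \<in> set (drop (Suc r) (key_col \<gamma> j))) ?cols)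
      + length (filter (\<lambda>j. r < length (key_col \<gamma> j) \<and> key_col \<gamma> j ! r = i) ?cols)"
    using Suc.hyps(1)[of "Suc r"] Suc.hyps(2) unfolding nth_key[OF r] count_list_map_filter by simp
  also have "\<dots> = length (filter (\<lambda>j. i \<in> set (drop r (key_col \<gamma> j))) ?cols)"
    by (subst length_filter_disj[symmetric]) (use disj in \<open>auto simp: mem\<close>)
  finally show ?case .
qed

lemma count_list_tab_word_key:
  "count_list (tab_word (key \<gamma>)) i = (if 1 \<le> i \<and> i \<le> length \<gamma> then \<gamma> ! (i - 1) else 0)"
proof -
  let ?M = "Max (insert 0 (set \<gamma>))"
  have "count_list (tab_word (key \<gamma>)) i = length (filter (\<lambda>j. i \<in> set (key_col \<gamma> j)) [1..<?M + 1])"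
    using count_list_tab_word_drop_key[of 0] by simp
  also have "\<dots> = (if 1 \<le> i \<and> i \<le> length \<gamma> then \<gamma> ! (i - 1) else 0)"
  proof (cases "1 \<le> i \<and> i \<le> length \<gamma>")
    case True
    then have "\<gamma> ! (i - 1) \<le> ?M" by (intro Max_ge) auto
    then show ?thesis using True filter_le_upt[of "\<gamma> ! (i - 1)" ?M] by (simp add: set_key_col)
  qed (auto simp: set_key_col)
  finally show ?thesis .
qed

lemma content_tab_word_key: "content (length \<gamma>) (tab_word (key \<gamma>)) = \<gamma>"
  by (rule nth_equalityI) (simp_all add: nth_content count_list_tab_word_key)

lemma set_tab_word_key: "set (tab_word (key \<gamma>)) \<subseteq> {1..length \<gamma>}"
proof
  fix i assume "i \<in> set (tab_word (key \<gamma>))"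
  then have "count_list (tab_word (key \<gamma>)) i \<noteq> 0" by (simp add: count_list_0_iff)
  then show "i \<in> {1..length \<gamma>}" by (auto simp: count_list_tab_word_key split: if_splits)
qed

lemma key_col_partition:
  assumes "sorted_wrt (\<ge>) \<alpha>"
  shows "key_col \<alpha> j = [1..<Suc (length (key_col \<alpha> j))]"
proof -
  have "key_col \<alpha> j = [1..<1 + length (key_col \<alpha> j)]"
    unfolding key_col_def
  proof (rule filter_upt_downward_closed)
    fix i i' assume "1 \<le> i" "i \<le> i'" "i' < length \<alpha> + 1" "j \<le> \<alpha> ! (i' - 1)"
    moreover have "\<alpha> ! (i' - 1) \<le> \<alpha> ! (i - 1)"
      using assms \<open>1 \<le> i\<close> \<open>i \<le> i'\<close> \<open>i' < length \<alpha> + 1\<close>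
      by (cases "i = i'") (auto simp: sorted_wrt_iff_nth_less)
    ultimately show "j \<le> \<alpha> ! (i - 1)" by simp
  qed
  then show ?thesis by simp
qed

lemma nth_key_partition:
  assumes "sorted_wrt (\<ge>) \<alpha>" "r < length (key \<alpha>)"
  shows "key \<alpha> ! r = replicate (\<alpha> ! r) (Suc r)"
proof -
  let ?M = "Max (insert 0 (set \<alpha>))"
  have in_col: "r < length (key_col \<alpha> j) \<longleftrightarrow> j \<le> \<alpha> ! r" for j
  proof -
    have "r < length \<alpha>"
      using assms(2) length_key_col_le[of \<alpha> 1] by (simp add: length_key)
    then have "Suc r \<in> set (key_col \<alpha> j) \<longleftrightarrow> j \<le> \<alpha> ! r" by (simp add: set_key_col)
    moreover have "Suc r \<in> set (key_col \<alpha> j) \<longleftrightarrow> r < length (key_col \<alpha> j)"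
      by (subst key_col_partition[OF assms(1)]) auto
    ultimately show ?thesis by simp
  qed
  have "\<alpha> ! r \<le> ?M"
    using assms(2) length_key_col_le[of \<alpha> 1] by (intro Max_ge) (auto simp: length_key)
  then have "filter (\<lambda>j. r < length (key_col \<alpha> j)) [1..<?M + 1] = [1..<Suc (\<alpha> ! r)]"
    using filter_le_upt[of "\<alpha> ! r" ?M] by (simp add: in_col del: upt_Suc)
  moreover have "key_col \<alpha> j ! r = Suc r" if "j \<le> \<alpha> ! r" for j
    using key_col_partition[OF assms(1), of j] in_col[of j] that
    by (metis add_0 nth_upt plus_1_eq_Suc Suc_mono)
  then have "map (\<lambda>j. key_col \<alpha> j ! r) [1..<Suc (\<alpha> ! r)] = map (\<lambda>_. Suc r) [1..<Suc (\<alpha> ! r)]"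
    by (intro map_cong) auto
  ultimately show ?thesis
    by (simp add: nth_key[OF assms(2)] map_replicate_const del: upt_Suc)
qed

lemma superstandard_word_eq_tab_word:
  "superstandard_word f k = tab_word (map (\<lambda>r. replicate (f (Suc r)) (Suc r)) [0..<k])"
  by (induction k) (auto simp: tab_word_def)

lemma yamanouchi_tab_word_key:
  assumes "sorted_wrt (\<ge>) \<alpha>"
  shows "yamanouchi (tab_word (key \<alpha>))"
proof -
  let ?L = "length (key \<alpha>)"
  have L: "?L \<le> length \<alpha>"
    using length_key_col_le[of \<alpha> 1] by (simp add: length_key)
  have "key \<alpha> = map (\<lambda>r. replicate (\<alpha> ! r) (Suc r)) [0..<?L]"
    by (rule nth_equalityI) (simp_all add: nth_key_partition[OF assms])
  then have "tab_word (key \<alpha>) = superstandard_word (\<lambda>i. \<alpha> ! (i - 1)) ?L"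
    by (simp add: superstandard_word_eq_tab_word)
  moreover have "\<alpha> ! i \<le> \<alpha> ! (i - 1)" if "0 < i" "i < ?L" for i
    using assms that L by (simp add: sorted_wrt_iff_nth_less)
  ultimately show ?thesis by (simp add: yamanouchi_superstandard_word)
qed

lemma knuth_equiv_key_partition_iff:
  assumes "sorted_wrt (\<ge>) \<alpha>" "set w \<subseteq> {1..length \<alpha>}"
  shows "knuth_equiv w (tab_word (key \<alpha>)) \<longleftrightarrow> yamanouchi w \<and> content (length \<alpha>) w = \<alpha>"
proof -
  let ?Y = "tab_word (key \<alpha>)"
  have content: "content (length \<alpha>) w = \<alpha> \<longleftrightarrow> count_list w = count_list ?Y"
    using content_eq_iff_count_list_eq[OF assms(2) set_tab_word_key]
    by (simp add: content_tab_word_key)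
  have yam: "yamanouchi ?Y"
    by (rule yamanouchi_tab_word_key[OF assms(1)])
  show ?thesis
  proof
    assume "knuth_equiv w ?Y"
    then show "yamanouchi w \<and> content (length \<alpha>) w = \<alpha>"
      using knuth_equiv_yamanouchi knuth_equiv_count_list yam content by blast
  next
    assume "yamanouchi w \<and> content (length \<alpha>) w = \<alpha>"
    then show "knuth_equiv w ?Y"
      using yam content assms(2) set_tab_word_key by (intro yamanouchi_knuth_equiv) auto
  qed
qed

lemma key_col_antipartition:
  assumes "sorted_wrt (\<le>) \<beta>"
  shows "key_col \<beta> j = [Suc (length \<beta>) - length (key_col \<beta> j)..<Suc (length \<beta>)]"
proof -
  have "key_col \<beta> j = [length \<beta> + 1 - length (key_col \<beta> j)..<length \<beta> + 1]"
    unfolding key_col_def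
  proof (rule filter_upt_upward_closed)
    fix i i' assume "1 \<le> i" "i \<le> i'" "i' < length \<beta> + 1" "j \<le> \<beta> ! (i - 1)"
    then have "\<beta> ! (i - 1) \<le> \<beta> ! (i' - 1)" by (intro sorted_nth_mono[OF assms]) auto
    with \<open>j \<le> \<beta> ! (i - 1)\<close> show "j \<le> \<beta> ! (i' - 1)" by simp
  qed
  then show ?thesis by simp
qed

lemma increasing_content_prefix_tab_word:
  assumes "\<And>r i. r < length T \<Longrightarrow> 0 < i \<Longrightarrow> i < n \<Longrightarrow>
      count_list (tab_word (drop r T)) i \<le> count_list (tab_word (drop (Suc r) T)) (Suc i)"
    and "prefix q (tab_word T)"
  shows "increasing_content n q"
  using assms
proof (induction T arbitrary: q)
  case Nil
  then show ?case by (simp add: increasing_content_def)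
next
  case (Cons t T)
  from Cons.prems(2) consider "prefix q (tab_word T)" | us where "q = tab_word T @ us" "prefix us t"
    by (auto simp: prefix_append)
  then show ?case
  proof cases
    case 1
    then show ?thesis using Cons.IH Cons.prems(1)[of "Suc _"] by simp
  next
    case 2
    show ?thesis
      unfolding increasing_content_def
    proof (intro allI impI)
      fix i assume "0 < i" "i < n"
      have "count_list q i \<le> count_list (tab_word (t # T)) i"
        using 2 by (auto simp: prefix_def)
      also have "\<dots> \<le> count_list (tab_word T) (Suc i)"
        using Cons.prems(1)[of 0 i] \<open>0 < i\<close> \<open>i < n\<close> by simp
      also have "\<dots> \<le> count_list q (Suc i)"
        using 2 by simp
      finally show "count_list q i \<le> count_list q (Suc i)" .
    qed
  qed
qed

lemma yamanouchi_rev_compl_tab_word_key: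
  assumes "sorted_wrt (\<le>) \<beta>"
  shows "yamanouchi (rev_compl (length \<beta>) (tab_word (key \<beta>)))"
proof -
  let ?n = "length \<beta>"
  \<comment> \<open>The columns of \<open>key \<beta>\<close> are final segments of \<open>{1..n}\<close>, so the letters \<open>i\<close> in rows
     \<open>r, r + 1, \<dots>\<close> correspond to the letters \<open>i + 1\<close> in rows \<open>r + 1, r + 2, \<dots>\<close>.\<close>
  have mem: "i \<in> set (drop r (key_col \<beta> j)) \<longleftrightarrow> Suc ?n - length (key_col \<beta> j) + r \<le> i \<and> i \<le> ?n"
    for i r j by (subst key_col_antipartition[OF assms]) (auto simp del: upt_Suc)
  have "count_list (tab_word (drop r (key \<beta>))) i =
        count_list (tab_word (drop (Suc r) (key \<beta>))) (Suc i)"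
    if "i < ?n" for r i
    unfolding count_list_tab_word_drop_key mem
    by (rule arg_cong[where f = length], rule filter_cong[OF refl]) (use that in linarith)
  then have "increasing_content ?n q" if "prefix q (tab_word (key \<beta>))" for q
    using that by (intro increasing_content_prefix_tab_word) auto
  then show ?thesis by (simp add: yamanouchi_rev_compl_iff[OF set_tab_word_key])
qed

lemma knuth_equiv_key_antipartition_iff:
  assumes "sorted_wrt (\<le>) \<beta>" "set w \<subseteq> {1..length \<beta>}"
  shows "knuth_equiv w (tab_word (key \<beta>)) \<longleftrightarrow>
         yamanouchi (rev_compl (length \<beta>) w) \<and> content (length \<beta>) w = \<beta>"
proof -
  let ?n = "length \<beta>" and ?Y = "tab_word (key \<beta>)"
  have content: "content ?n w = \<beta> \<longleftrightarrow> count_list w = count_list ?Y"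
    using content_eq_iff_count_list_eq[OF assms(2) set_tab_word_key]
    by (simp add: content_tab_word_key)
  have yam: "yamanouchi (rev_compl ?n ?Y)"
    by (rule yamanouchi_rev_compl_tab_word_key[OF assms(1)])
  show ?thesis
  proof
    assume "knuth_equiv w ?Y"
    then show "yamanouchi (rev_compl ?n w) \<and> content ?n w = \<beta>"
      using knuth_equiv_rev_compl[OF _ assms(2)] knuth_equiv_yamanouchi knuth_equiv_count_list
        yam content by blast
  next
    assume "yamanouchi (rev_compl ?n w) \<and> content ?n w = \<beta>"
    then have "knuth_equiv (rev_compl ?n w) (rev_compl ?n ?Y)"
      using yam content set_rev_compl[OF assms(2)] set_rev_compl[OF set_tab_word_key]
        count_list_rev_compl_cong[OF assms(2) set_tab_word_key]
      by (intro yamanouchi_knuth_equiv[where n = ?n]) auto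
    then have "knuth_equiv (rev_compl ?n (rev_compl ?n w)) (rev_compl ?n (rev_compl ?n ?Y))"
      using set_rev_compl[OF assms(2)] by (rule knuth_equiv_rev_compl)
    then show "knuth_equiv w ?Y"
      using rev_compl_rev_compl[OF assms(2)] rev_compl_rev_compl[OF set_tab_word_key] by simp
  qed
qed

section \<open>Splitting a word of rectangular content\<close>

lemma yamanouchi_rev_compl_if_yamanouchi_append:
  assumes "set v \<subseteq> {1..n}" "content n (v @ u) = replicate n a" "yamanouchi (v @ u)"
  shows "yamanouchi (rev_compl n v)"
  unfolding yamanouchi_rev_compl_iff[OF assms(1)] increasing_content_def
proof (intro allI impI)
  fix q i assume "prefix q v" "0 < i" "i < n"
  then obtain s where v: "v = q @ s" by (auto simp: prefix_def)
  then have "decreasing_content (s @ u)"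
    using assms(3) by (auto simp: yamanouchi_def suffix_def)
  then have "count_list (s @ u) (Suc i) \<le> count_list (s @ u) i"
    using \<open>0 < i\<close> by (simp add: decreasing_content_def)
  then show "count_list q i \<le> count_list q (Suc i)"
    using count_list_if_content_eq_replicate[OF assms(2), of i]
      count_list_if_content_eq_replicate[OF assms(2), of "Suc i"] \<open>0 < i\<close> \<open>i < n\<close> v
    by simp
qed

lemma yamanouchi_append:
  assumes "set u \<subseteq> {1..n}" "set v \<subseteq> {1..n}" "content n (v @ u) = replicate n a"
    and "yamanouchi u" "yamanouchi (rev_compl n v)"
  shows "yamanouchi (v @ u)"
  unfolding yamanouchi_def
proof (intro allI impI)
  fix s assume "suffix s (v @ u)"
  then consider "suffix s u" | q s' where "s = s' @ u" "v = q @ s'"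
    by (metis suffix_append suffixE)
  then show "decreasing_content s"
  proof cases
    case 1
    then show ?thesis using assms(4) by (simp add: yamanouchi_def)
  next
    case 2
    have inc: "increasing_content n q"
      using assms(5) 2(2) unfolding yamanouchi_rev_compl_iff[OF assms(2)] by (simp add: prefix_def)
    show ?thesis
      unfolding decreasing_content_def
    proof (intro allI impI)
      fix i :: nat assume "0 < i"
      show "count_list s (Suc i) \<le> count_list s i"
      proof (cases "i < n")
        case True
        then have "count_list q i \<le> count_list q (Suc i)"
          using inc \<open>0 < i\<close> by (simp add: increasing_content_def)
        moreover have "count_list (v @ u) i = a" "count_list (v @ u) (Suc i) = a"
          using count_list_if_content_eq_replicate[OF assms(3)] \<open>0 < i\<close> True by simp_all
        ultimately show ?thesis using 2 by simp
      next
        case False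
        then have "Suc i \<notin> set s" using assms(1,2) 2 by auto
        then show ?thesis by simp
      qed
    qed
  qed
qed

lemma yamanouchi_append_iff:
  assumes "set u \<subseteq> {1..n}" "set v \<subseteq> {1..n}" "content n (v @ u) = replicate n a"
  shows "yamanouchi (v @ u) \<longleftrightarrow> yamanouchi u \<and> yamanouchi (rev_compl n v)"
  using yamanouchi_appendD yamanouchi_rev_compl_if_yamanouchi_append[OF assms(2,3)]
    yamanouchi_append[OF assms] by blast

theorem proposition5p4:
  fixes a n :: nat and u v :: "nat list"
  assumes "0 < a" and "0 < n"
    and "set u \<subseteq> {1..n}" and "set v \<subseteq> {1..n}"
  shows "knuth_equiv (v @ u) (tab_word (key (replicate n a))) \<longleftrightarrow>
         (sorted_wrt (\<ge>) (content n u)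
          \<and> map2 (+) (content n u) (content n v) = replicate n a
          \<and> knuth_equiv u (tab_word (key (content n u)))
          \<and> knuth_equiv v (tab_word (key (content n v))))"
proof -
  let ?\<alpha> = "content n u" and ?\<beta> = "content n v"
  have "knuth_equiv (v @ u) (tab_word (key (replicate n a))) \<longleftrightarrow>
        yamanouchi (v @ u) \<and> content n (v @ u) = replicate n a"
    using knuth_equiv_key_partition_iff[of "replicate n a" "v @ u"] assms(3,4)
    by (simp add: sorted_wrt_iff_nth_less)
  also have "\<dots> \<longleftrightarrow> yamanouchi u \<and> yamanouchi (rev_compl n v) \<and> map2 (+) ?\<alpha> ?\<beta> = replicate n a"
    using yamanouchi_append_iff[OF assms(3,4)] by (metis content_append_commute)
  also have "\<dots> \<longleftrightarrow> sorted_wrt (\<ge>) ?\<alpha> \<and> map2 (+) ?\<alpha> ?\<beta> = replicate n a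
                    \<and> yamanouchi u \<and> yamanouchi (rev_compl n v)"
    using decreasing_content_imp_sorted yamanouchi_imp_decreasing_content by blast
  also have "\<dots> \<longleftrightarrow> sorted_wrt (\<ge>) ?\<alpha> \<and> map2 (+) ?\<alpha> ?\<beta> = replicate n a
                    \<and> knuth_equiv u (tab_word (key ?\<alpha>)) \<and> knuth_equiv v (tab_word (key ?\<beta>))"
    using knuth_equiv_key_partition_iff[of ?\<alpha> u] knuth_equiv_key_antipartition_iff[of ?\<beta> v]
      sorted_of_map2_add_eq_replicate[of ?\<beta> ?\<alpha> a] assms(3,4) by auto
  finally show ?thesis .
qed

end
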